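(* Fix the quantities $P(h)$, $P(h\mid h)$, $P(h\mid\ell)$ satisfying the standing assumptions, and fix a strictly proper scoring rule $PS$. Then there exists $n_0$, depending only on these data, with the following property. For every $n\ge n_0$ and every symmetric common prior on $\{\ell,h\}^n$ whose one- and two-agent marginals are given by these quantities, the truthful profile $\Sigma^*$ is a Bayesian $k_B$-strong equilibrium. Here $$k_B^h=\begin{cases}\left\lceil \dfrac{(n-1)\,\mathbb E_{s\sim P_\ell}[PS(s,P_\ell)-PS(s,P_h)]}{P(\ell\mid\ell)\,(PS(h,P_h)-PS(\ell,P_h))}\right\rceil & \text{if } PS(h,P_h)>PS(\ell,P_h),\\ n&\text{otherwise,}\end{cases}$$ $$k_B^\ell=\begin{cases}\left\lceil \dfrac{(n-1)\,\mathbb E_{s\sim P_h}[PS(s,P_h)-PS(s,P_\ell)]}{P(h\mid h)\,(PS(\ell,P_\ell)-PS(h,P_\ell))}\right\rceil & \text{if } PS(\ell,P_\ell)>PS(h,P_\ell),\\ n&\text{otherwise,}\end{cases}$$ and $k_B=\min(k_B^h,k_B^\ell,n)$. Moreover, for every integer $k$ with $k_B<k\le n$, $\Sigma^*$ is not a Bayesian $k$-strong equilibrium.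
   Context: Peer prediction setting. There are $n\ge 2$ agents $[n]$. Each agent $i$ privately observes a signal $\Psi_i\in\{\ell,h\}$ and reports $r_i\in\{\ell,h\}$. Signals are drawn from a common prior $Q$ on $\{\ell,h\}^n$ that is symmetric, i.e., invariant under permutations of the agents. $P(s)$ denotes the marginal probability that an agent has signal $s$. $P(s\mid s')$ denotes the probability that another agent $j\ne i$ has signal $s$ given that agent $i$ has signal $s'$. $P_{s'}=P(\cdot\mid s')$ is the corresponding distribution on $\{\ell,h\}$. Standing assumptions: $P(\ell),P(h)>0$, $P(h\mid h)>P(h\mid\ell)$, $P(h\mid\ell)>0$ and $P(\ell\mid h)>0$. A scoring rule $PS:\{\ell,h\}\times\Delta_{\{\ell,h\}}\to\mathbb R$ is strictly proper if $\mathbb E_{s\sim p}[PS(s,p)]>\mathbb E_{s\sim p}[PS(s,q)]$ for all distributions $p\ne q$. The mechanism gives agent $i$ the utility $v_i=\frac1{n-1}\sum_{j\ne i}PS(r_j,P_{r_i})$. A strategy is a pair $\sigma=(\beta_\ell,\beta_h)\in[0,1]^2$, where $\beta_\ell$ and $\beta_h$ are the probabilities of reporting $h$ given signal $\ell$ and signal $h$, respectively. Given signals, reports are drawn independently. The truthful strategy is $(0,1)$, and $\Sigma^*$ is the profile in which all agents play it. The interim utility $u_i(\Sigma\mid s)$ is the expectation of $v_i$ conditioned on $\Psi_i=s$. A profile $\Sigma$ is a Bayesian $k$-strong equilibrium if there is no set $D\subseteq[n]$ with $|D|\le k$ and no profile $\Sigma'$ such that: (1) agents outside $D$ keep their strategies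 from $\Sigma$; (2) $u_i(\Sigma'\mid s)\ge u_i(\Sigma\mid s)$ for all $i\in D$ and both $s\in\{\ell,h\}$; and (3) strict inequality holds for some $i\in D$ and some $s$. *)

theory Defs
  imports Complex_Main "HOL-Combinatorics.Permutations"
begin

(* Signals/reports: bool, with True = h and False = l.
   Agents: 0..n-1.  A signal (or report) vector is a function nat => bool
   that is False outside {..<n}.  A distribution on {l,h} is represented
   by its probability of h (a real in [0,1]). *)

definition vecs :: "nat \<Rightarrow> (nat \<Rightarrow> bool) set" where
  "vecs n = {s. \<forall>i\<ge>n. \<not> s i}"

definition symmetric_prior :: "nat \<Rightarrow> ((nat \<Rightarrow> bool) \<Rightarrow> real) \<Rightarrow> bool" where
  "symmetric_prior n Q \<longleftrightarrow>
     (\<forall>s\<in>vecs n. Q s \<ge> 0) \<and> (\<Sum>s\<in>vecs n. Q s) = 1 \<and>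
     (\<forall>\<pi> s. \<pi> permutes {..<n} \<longrightarrow> s \<in> vecs n \<longrightarrow> Q (s \<circ> \<pi>) = Q s)"

definition prob_ev :: "nat \<Rightarrow> ((nat \<Rightarrow> bool) \<Rightarrow> real) \<Rightarrow> ((nat \<Rightarrow> bool) \<Rightarrow> bool) \<Rightarrow> real" where
  "prob_ev n Q E = (\<Sum>s\<in>vecs n. if E s then Q s else 0)"

(* P(h): marginal probability that an agent (agent 0, by symmetry) has signal h *)
definition marg_h :: "nat \<Rightarrow> ((nat \<Rightarrow> bool) \<Rightarrow> real) \<Rightarrow> real" where
  "marg_h n Q = prob_ev n Q (\<lambda>s. s 0)"

(* P(h | b): probability that another agent (agent 1) has h given agent 0 has b *)
definition cond_h :: "nat \<Rightarrow> ((nat \<Rightarrow> bool) \<Rightarrow> real) \<Rightarrow> bool \<Rightarrow> real" where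
  "cond_h n Q b = prob_ev n Q (\<lambda>s. s 0 = b \<and> s 1) / prob_ev n Q (\<lambda>s. s 0 = b)"

(* strictly proper scoring rule; PS r p with p = probability of h *)
definition strictly_proper :: "(bool \<Rightarrow> real \<Rightarrow> real) \<Rightarrow> bool" where
  "strictly_proper PS \<longleftrightarrow>
     (\<forall>p q. 0 \<le> p \<and> p \<le> 1 \<and> 0 \<le> q \<and> q \<le> 1 \<and> p \<noteq> q \<longrightarrow>
        p * PS True p + (1 - p) * PS False p > p * PS True q + (1 - p) * PS False q)"

(* a strategy is (beta_l, beta_h); a profile assigns a strategy to each agent *)
definition valid_profile :: "nat \<Rightarrow> (nat \<Rightarrow> real \<times> real) \<Rightarrow> bool" where
  "valid_profile n \<Sigma> \<longleftrightarrow>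
     (\<forall>i<n. 0 \<le> fst (\<Sigma> i) \<and> fst (\<Sigma> i) \<le> 1 \<and> 0 \<le> snd (\<Sigma> i) \<and> snd (\<Sigma> i) \<le> 1)"

definition truthful :: "nat \<Rightarrow> real \<times> real" where
  "truthful = (\<lambda>i. (0, 1))"

definition rep_prob :: "real \<times> real \<Rightarrow> bool \<Rightarrow> bool \<Rightarrow> real" where
  "rep_prob \<sigma> sg r = (let \<beta> = (if sg then snd \<sigma> else fst \<sigma>) in if r then \<beta> else 1 - \<beta>)"

definition payment :: "(bool \<Rightarrow> real \<Rightarrow> real) \<Rightarrow> nat \<Rightarrow> ((nat \<Rightarrow> bool) \<Rightarrow> real)
    \<Rightarrow> nat \<Rightarrow> (nat \<Rightarrow> bool) \<Rightarrow> real" where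
  "payment PS n Q i r = (1 / (real n - 1)) * (\<Sum>j\<in>{..<n} - {i}. PS (r j) (cond_h n Q (r i)))"

definition interim_util :: "(bool \<Rightarrow> real \<Rightarrow> real) \<Rightarrow> nat \<Rightarrow> ((nat \<Rightarrow> bool) \<Rightarrow> real)
    \<Rightarrow> (nat \<Rightarrow> real \<times> real) \<Rightarrow> nat \<Rightarrow> bool \<Rightarrow> real" where
  "interim_util PS n Q \<Sigma> i sg =
     (\<Sum>s\<in>vecs n. \<Sum>r\<in>vecs n.
        if s i = sg then Q s * (\<Prod>j<n. rep_prob (\<Sigma> j) (s j) (r j)) * payment PS n Q i r else 0)
     / prob_ev n Q (\<lambda>s. s i = sg)"

definition bayes_strong_eq :: "(bool \<Rightarrow> real \<Rightarrow> real) \<Rightarrow> nat \<Rightarrow> ((nat \<Rightarrow> bool) \<Rightarrow> real)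
    \<Rightarrow> nat \<Rightarrow> (nat \<Rightarrow> real \<times> real) \<Rightarrow> bool" where
  "bayes_strong_eq PS n Q k \<Sigma> \<longleftrightarrow>
     \<not> (\<exists>D \<Sigma>'. D \<subseteq> {..<n} \<and> card D \<le> k \<and> valid_profile n \<Sigma>' \<and>
          (\<forall>i<n. i \<notin> D \<longrightarrow> \<Sigma>' i = \<Sigma> i) \<and>
          (\<forall>i\<in>D. \<forall>sg. interim_util PS n Q \<Sigma>' i sg \<ge> interim_util PS n Q \<Sigma> i sg) \<and>
          (\<exists>i\<in>D. \<exists>sg. interim_util PS n Q \<Sigma>' i sg > interim_util PS n Q \<Sigma> i sg))"

(* k_B^h, k_B^l, k_B ; phl = P(h|l), phh = P(h|h) *)
definition kB_h :: "(bool \<Rightarrow> real \<Rightarrow> real) \<Rightarrow> real \<Rightarrow> real \<Rightarrow> nat \<Rightarrow> int" where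
  "kB_h PS phl phh n =
     (if PS True phh > PS False phh then
        \<lceil>(real n - 1) * (phl * (PS True phl - PS True phh) + (1 - phl) * (PS False phl - PS False phh))
          / ((1 - phl) * (PS True phh - PS False phh))\<rceil>
      else int n)"

definition kB_l :: "(bool \<Rightarrow> real \<Rightarrow> real) \<Rightarrow> real \<Rightarrow> real \<Rightarrow> nat \<Rightarrow> int" where
  "kB_l PS phl phh n =
     (if PS False phl > PS True phl then
        \<lceil>(real n - 1) * (phh * (PS True phh - PS True phl) + (1 - phh) * (PS False phh - PS False phl))
          / (phh * (PS False phl - PS True phl))\<rceil>
      else int n)"

definition kB :: "(bool \<Rightarrow> real \<Rightarrow> real) \<Rightarrow> real \<Rightarrow> real \<Rightarrow> nat \<Rightarrow> int" where
  "kB PS phl phh n = min (kB_h PS phl phh n) (min (kB_l PS phl phh n) (int n))"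

end

(* Write x j and z j for the probabilities that agent j reports h on signal l and l on signal h.
   By symmetry of the prior, the interim utility of agent i is affine in the expected excess of
   h-reports that the other agents produce, so (n - 1) times its gain over truth-telling is
   lie_gain (x i) a b c P: a and b are the score gaps PS(h, .) - PS(l, .) at the posteriors of
   the truthful report and of the lie, c > 0 is (n - 1) times the loss from lying alone
   (strict properness), and P is the shift produced by i's partners in the coalition D.
   Strict properness also makes the score gap increasing, a < b.
   If |D| <= k_B, a partner shift can never outweigh c: when a < 0 < b the shifts seen on the
   l- and on the h-side are forced to vanish, and when both gaps have the same sign the member
   lying most often cannot recover its loss; hence nobody in D lies and nobody gains.
   Conversely, k > k_B agents who all report h (if the gap at P_h is positive) or all report l
   (if the gap at P_l is negative) shift the reports enough for each of them to gain. *)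

theory Submission
  imports Defs
begin

lemma vecs_0:
  "vecs 0 = {\<lambda>_. False}"
  by (auto simp: vecs_def)

lemma vecs_Suc: "vecs (Suc n) = (\<lambda>(s, b). s(n := b)) ` (vecs n \<times> UNIV)"
proof
  show "vecs (Suc n) \<subseteq> (\<lambda>(s, b). s(n := b)) ` (vecs n \<times> UNIV)"
  proof
    fix s assume "s \<in> vecs (Suc n)"
    then have "s(n := False) \<in> vecs n" and "s = (s(n := False))(n := s n)"
      by (auto simp: vecs_def)
    then show "s \<in> (\<lambda>(s, b). s(n := b)) ` (vecs n \<times> UNIV)"
      by (intro image_eqI[where x="(s(n := False), s n)"]) auto
  qed
qed (auto simp: vecs_def)

lemma inj_on_vecs_upd: "inj_on (\<lambda>(s, b). s(n := b)) (vecs n \<times> UNIV)"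
proof (rule inj_onI, clarsimp)
  fix s b s' b' assume "s \<in> vecs n" "s' \<in> vecs n" and eq: "s(n := b) = s'(n := b')"
  then have "s x = s' x" for x
    by (cases "x = n") (auto simp: vecs_def dest: fun_cong[where x=x])
  with fun_cong[OF eq, of n] show "s = s' \<and> b = b'" by auto
qed

lemma sum_vecs_Suc:
  "(\<Sum>s\<in>vecs (Suc n). f s) = (\<Sum>s\<in>vecs n. f (s(n := True)) + f (s(n := False)))"
proof -
  have "(\<Sum>s\<in>vecs (Suc n). f s) = (\<Sum>(s, b)\<in>vecs n \<times> UNIV. f (s(n := b)))"
    unfolding vecs_Suc by (subst sum.reindex[OF inj_on_vecs_upd]) (simp add: case_prod_beta')
  also have "\<dots> = (\<Sum>s\<in>vecs n. f (s(n := True)) + f (s(n := False)))"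
    by (simp add: sum.cartesian_product[symmetric] UNIV_bool add.commute)
  finally show ?thesis .
qed

text \<open>Coordinates \<open>k \<ge> n\<close> of a vector in \<^term>\<open>vecs n\<close> are constantly \<^term>\<open>False\<close>.\<close>
definition coord_weight :: "(nat \<Rightarrow> bool \<Rightarrow> real) \<Rightarrow> nat \<Rightarrow> nat \<Rightarrow> bool \<Rightarrow> real" where
  "coord_weight w n k b = (if k < n then w k b else of_bool (\<not> b))"

lemma sum_vecs_prod_two_coords:
  assumes w: "\<And>k. w k True + w k False = 1" and "i \<noteq> j"
  shows "(\<Sum>r\<in>vecs n. (\<Prod>k<n. w k (r k)) * F (r i) (r j)) =
         (\<Sum>a\<in>UNIV. \<Sum>b\<in>UNIV. coord_weight w n i a * coord_weight w n j b * F a b)"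
proof (induction n arbitrary: F)
  case 0
  then show ?case by (simp add: vecs_0 coord_weight_def UNIV_bool)
next
  case (Suc n)
  define F' where "F' a b = (\<Sum>c\<in>UNIV. w n c * F (if i = n then c else a) (if j = n then c else b))"
    for a b
  have "(\<Sum>r\<in>vecs (Suc n). (\<Prod>k<Suc n. w k (r k)) * F (r i) (r j))
      = (\<Sum>s\<in>vecs n. (\<Prod>k<n. w k (s k)) * F' (s i) (s j))"
    unfolding sum_vecs_Suc
  proof (rule sum.cong[OF refl])
    fix s assume s: "s \<in> vecs n"
    have "(\<Prod>k<n. w k ((s(n := c)) k)) = (\<Prod>k<n. w k (s k))" for c
      by (rule prod.cong) auto
    moreover have "i = n \<Longrightarrow> \<not> s i" "j = n \<Longrightarrow> \<not> s j"
      using s by (auto simp: vecs_def)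
    ultimately show "(\<Prod>k<Suc n. w k ((s(n := True)) k)) * F ((s(n := True)) i) ((s(n := True)) j) +
        (\<Prod>k<Suc n. w k ((s(n := False)) k)) * F ((s(n := False)) i) ((s(n := False)) j) =
        (\<Prod>k<n. w k (s k)) * F' (s i) (s j)"
      using \<open>i \<noteq> j\<close> by (auto simp: F'_def UNIV_bool algebra_simps)
  qed
  also have "\<dots> = (\<Sum>a\<in>UNIV. \<Sum>b\<in>UNIV. coord_weight w n i a * coord_weight w n j b * F' a b)"
    by (rule Suc.IH)
  also have "\<dots> = (\<Sum>a\<in>UNIV. \<Sum>b\<in>UNIV. coord_weight w (Suc n) i a * coord_weight w (Suc n) j b * F a b)"
  proof -
    have wn: "w n True = 1 - w n False"
      using w[of n] by simp
    show ?thesis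
      using \<open>i \<noteq> j\<close>
      by (cases "i < n"; cases "j < n"; cases "i = n"; cases "j = n")
         (auto simp: coord_weight_def F'_def UNIV_bool algebra_simps wn)
  qed
  finally show ?case .
qed

lemma comp_permutes_in_vecs: "\<pi> permutes {..<n} \<Longrightarrow> s \<in> vecs n \<Longrightarrow> s \<circ> \<pi> \<in> vecs n"
  by (auto simp: vecs_def permutes_not_in)

lemma sum_vecs_permute:
  assumes "\<pi> permutes {..<n}"
  shows "(\<Sum>s\<in>vecs n. f (s \<circ> \<pi>)) = (\<Sum>s\<in>vecs n. f s)"
proof (rule sum.reindex_bij_witness[where j="\<lambda>s. s \<circ> \<pi>" and i="\<lambda>s. s \<circ> inv \<pi>"])
  fix s assume "s \<in> vecs n"
  then show "s \<circ> \<pi> \<circ> inv \<pi> = s" "s \<circ> inv \<pi> \<circ> \<pi> = s" "s \<circ> \<pi> \<in> vecs n" "s \<circ> inv \<pi> \<in> vecs n"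
    using assms permutes_inv[OF assms]
    by (simp_all add: comp_assoc permutes_inv_o comp_permutes_in_vecs)
qed simp

lemma prob_ev_permute:
  assumes "symmetric_prior n Q" and "\<pi> permutes {..<n}"
  shows "prob_ev n Q (\<lambda>s. E (s \<circ> \<pi>)) = prob_ev n Q E"
proof -
  have "prob_ev n Q E = (\<Sum>s\<in>vecs n. if E (s \<circ> \<pi>) then Q (s \<circ> \<pi>) else 0)"
    unfolding prob_ev_def by (rule sum_vecs_permute[OF assms(2), symmetric])
  also have "\<dots> = prob_ev n Q (\<lambda>s. E (s \<circ> \<pi>))"
    unfolding prob_ev_def using assms by (intro sum.cong) (auto simp: symmetric_prior_def)
  finally show ?thesis by simp
qed

lemma prob_ev_pair_symmetric:
  assumes "symmetric_prior n Q" and "i \<noteq> j" "i < n" "j < n" "n \<ge> 2"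
  shows "prob_ev n Q (\<lambda>s. E (s i) (s j)) = prob_ev n Q (\<lambda>s. E (s 0) (s 1))"
proof -
  define \<pi> where "\<pi> = transpose 0 i \<circ> transpose 1 (transpose 0 i j)"
  have "\<pi> permutes {..<n}"
    unfolding \<pi>_def using assms by (intro permutes_compose permutes_swap_id) (auto simp: transpose_def)
  moreover have "\<pi> 0 = i" "\<pi> 1 = j"
    using assms by (auto simp: \<pi>_def transpose_def)
  ultimately show ?thesis
    using prob_ev_permute[OF assms(1), of \<pi> "\<lambda>s. E (s 0) (s 1)"] by simp
qed

lemma prob_ev_agent_symmetric:
  assumes "symmetric_prior n Q" "i < n" "n \<ge> 2"
  shows "prob_ev n Q (\<lambda>s. E (s i)) = prob_ev n Q (\<lambda>s. E (s 0))"
proof -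
  define j :: nat where "j = (if i = 0 then 1 else 0)"
  have "j \<noteq> i" "j < n"
    using assms by (auto simp: j_def)
  then show ?thesis
    using prob_ev_pair_symmetric[OF assms(1) _ assms(2) _ assms(3), of j "\<lambda>a b. E a"] by simp
qed

lemma prob_ev_split:
  "prob_ev n Q E = prob_ev n Q (\<lambda>s. E s \<and> F s) + prob_ev n Q (\<lambda>s. E s \<and> \<not> F s)"
  unfolding prob_ev_def by (subst sum.distrib[symmetric]) (rule sum.cong, auto)

lemma prob_ev_signal_pos:
  assumes "symmetric_prior n Q" "0 < marg_h n Q" "marg_h n Q < 1"
  shows "prob_ev n Q (\<lambda>s. s 0 = sg) > 0"
proof -
  have "prob_ev n Q (\<lambda>s. True) = 1"
    using assms(1) by (simp add: prob_ev_def symmetric_prior_def)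
  then have "prob_ev n Q (\<lambda>s. \<not> s 0) = 1 - marg_h n Q"
    using prob_ev_split[of n Q "\<lambda>s. True" "\<lambda>s. s 0"] by (simp add: marg_h_def)
  then show ?thesis
    using assms(2,3) by (cases sg) (simp_all add: marg_h_def)
qed

definition expected_score :: "(bool \<Rightarrow> real \<Rightarrow> real) \<Rightarrow> real \<Rightarrow> real \<Rightarrow> real" where
  "expected_score PS c r = c * PS True r + (1 - c) * PS False r"

definition score_gap :: "(bool \<Rightarrow> real \<Rightarrow> real) \<Rightarrow> real \<Rightarrow> real" where
  "score_gap PS r = PS True r - PS False r"

definition pair_score :: "(bool \<Rightarrow> real \<Rightarrow> real) \<Rightarrow> nat \<Rightarrow> ((nat \<Rightarrow> bool) \<Rightarrow> real)
    \<Rightarrow> real \<times> real \<Rightarrow> real \<times> real \<Rightarrow> bool \<Rightarrow> bool \<Rightarrow> real" where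
  "pair_score PS n Q \<sigma> \<tau> sg t =
     (\<Sum>a\<in>UNIV. rep_prob \<sigma> sg a * (\<Sum>b\<in>UNIV. rep_prob \<tau> t b * PS b (cond_h n Q a)))"

lemma rep_prob_sum: "rep_prob \<sigma> sg True + rep_prob \<sigma> sg False = 1"
  by (simp add: rep_prob_def Let_def)

lemma expected_payment:
  assumes "i < n"
  shows "(\<Sum>r\<in>vecs n. (\<Prod>k<n. rep_prob (\<Sigma> k) (s k) (r k)) * payment PS n Q i r)
       = (\<Sum>j\<in>{..<n} - {i}. pair_score PS n Q (\<Sigma> i) (\<Sigma> j) (s i) (s j)) / (real n - 1)"
proof -
  have pair: "(\<Sum>r\<in>vecs n. (\<Prod>k<n. rep_prob (\<Sigma> k) (s k) (r k)) * PS (r j) (cond_h n Q (r i)))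
      = pair_score PS n Q (\<Sigma> i) (\<Sigma> j) (s i) (s j)"
    if "j \<in> {..<n} - {i}" for j
    using sum_vecs_prod_two_coords[of "\<lambda>k. rep_prob (\<Sigma> k) (s k)" i j n "\<lambda>a b. PS b (cond_h n Q a)"]
      that assms by (simp add: rep_prob_sum coord_weight_def pair_score_def sum_distrib_left mult.assoc)
  have "(\<Sum>r\<in>vecs n. (\<Prod>k<n. rep_prob (\<Sigma> k) (s k) (r k)) * payment PS n Q i r)
      = (\<Sum>j\<in>{..<n} - {i}. \<Sum>r\<in>vecs n. (\<Prod>k<n. rep_prob (\<Sigma> k) (s k) (r k)) * PS (r j) (cond_h n Q (r i)))
        / (real n - 1)"
    unfolding payment_def
    by (simp add: sum_distrib_left sum_divide_distrib sum.swap[of _ "vecs n"] mult_ac)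
  then show ?thesis
    using pair by simp
qed

text \<open>Conditioning on agent \<open>i\<close>'s signal, any other agent has signal \<open>h\<close> with probability
  \<^term>\<open>cond_h n Q sg\<close>, which is defined through agents \<open>0\<close> and \<open>1\<close> only.\<close>
lemma sum_vecs_partner_signal:
  assumes "symmetric_prior n Q" "i \<noteq> j" "i < n" "j < n" "n \<ge> 2"
    and "prob_ev n Q (\<lambda>s. s 0 = sg) > 0"
  shows "(\<Sum>s\<in>vecs n. if s i = sg then Q s * f (s j) else 0)
       = prob_ev n Q (\<lambda>s. s 0 = sg) * (cond_h n Q sg * f True + (1 - cond_h n Q sg) * f False)"
proof -
  define P0 where "P0 = prob_ev n Q (\<lambda>s. s 0 = sg)"
  have hh: "prob_ev n Q (\<lambda>s. s 0 = sg \<and> s 1) = cond_h n Q sg * P0"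
    using assms(6) by (simp add: cond_h_def P0_def)
  have "(\<Sum>s\<in>vecs n. if s i = sg then Q s * f (s j) else 0)
      = f True * prob_ev n Q (\<lambda>s. s i = sg \<and> s j) + f False * prob_ev n Q (\<lambda>s. s i = sg \<and> \<not> s j)"
    unfolding prob_ev_def sum_distrib_left sum.distrib[symmetric] by (rule sum.cong) auto
  also have "\<dots> = f True * prob_ev n Q (\<lambda>s. s 0 = sg \<and> s 1) + f False * prob_ev n Q (\<lambda>s. s 0 = sg \<and> \<not> s 1)"
    using prob_ev_pair_symmetric[OF assms(1-5), of "\<lambda>a b. a = sg \<and> b"]
      prob_ev_pair_symmetric[OF assms(1-5), of "\<lambda>a b. a = sg \<and> \<not> b"] by simp
  also have "\<dots> = f True * (cond_h n Q sg * P0) + f False * ((1 - cond_h n Q sg) * P0)"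
  proof -
    have "prob_ev n Q (\<lambda>s. s 0 = sg \<and> \<not> s 1) = (1 - cond_h n Q sg) * P0"
      using prob_ev_split[of n Q "\<lambda>s. s 0 = sg" "\<lambda>s. s 1"] hh by (simp add: P0_def algebra_simps)
    then show ?thesis
      by (simp only: hh)
  qed
  finally show ?thesis by (simp add: P0_def algebra_simps)
qed

lemma pair_score_partner_average:
  "c * pair_score PS n Q \<sigma> \<tau> sg True + (1 - c) * pair_score PS n Q \<sigma> \<tau> sg False
   = (\<Sum>a\<in>UNIV. rep_prob \<sigma> sg a * (expected_score PS c (cond_h n Q a)
       + score_gap PS (cond_h n Q a) * ((1 - c) * fst \<tau> - c * (1 - snd \<tau>))))"
  by (simp add: pair_score_def UNIV_bool rep_prob_def expected_score_def score_gap_def algebra_simps)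

lemma interim_util_pairwise:
  assumes sp: "symmetric_prior n Q" and n: "n \<ge> 2" and i: "i < n"
    and pos: "prob_ev n Q (\<lambda>s. s 0 = sg) > 0"
  defines "c \<equiv> cond_h n Q sg"
  shows "interim_util PS n Q \<Sigma> i sg = (\<Sum>j\<in>{..<n} - {i}.
      c * pair_score PS n Q (\<Sigma> i) (\<Sigma> j) sg True + (1 - c) * pair_score PS n Q (\<Sigma> i) (\<Sigma> j) sg False)
      / (real n - 1)"
proof -
  define P0 where "P0 = prob_ev n Q (\<lambda>s. s 0 = sg)"
  define J where "J = {..<n} - {i}"
  define G where "G j t = pair_score PS n Q (\<Sigma> i) (\<Sigma> j) sg t" for j t
  have "(\<Sum>s\<in>vecs n. \<Sum>r\<in>vecs n.
          if s i = sg then Q s * (\<Prod>j<n. rep_prob (\<Sigma> j) (s j) (r j)) * payment PS n Q i r else 0)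
      = (\<Sum>s\<in>vecs n. (\<Sum>j\<in>J. if s i = sg then Q s * G j (s j) else 0) / (real n - 1))"
  proof (rule sum.cong[OF refl])
    fix s
    show "(\<Sum>r\<in>vecs n. if s i = sg
          then Q s * (\<Prod>j<n. rep_prob (\<Sigma> j) (s j) (r j)) * payment PS n Q i r else 0)
        = (\<Sum>j\<in>J. if s i = sg then Q s * G j (s j) else 0) / (real n - 1)"
      using expected_payment[OF i, of \<Sigma> s PS Q]
      by (cases "s i = sg") (simp_all add: G_def J_def mult.assoc flip: sum_distrib_left)
  qed
  also have "\<dots> = (\<Sum>j\<in>J. \<Sum>s\<in>vecs n. if s i = sg then Q s * G j (s j) else 0) / (real n - 1)"
    by (simp add: sum.swap[of _ J] flip: sum_divide_distrib)
  also have "\<dots> = P0 * (\<Sum>j\<in>J. c * G j True + (1 - c) * G j False) / (real n - 1)"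
    using sum_vecs_partner_signal[OF sp _ i _ n pos]
    by (simp add: J_def P0_def c_def sum_distrib_left)
  finally have num: "(\<Sum>s\<in>vecs n. \<Sum>r\<in>vecs n.
          if s i = sg then Q s * (\<Prod>j<n. rep_prob (\<Sigma> j) (s j) (r j)) * payment PS n Q i r else 0)
      = P0 * (\<Sum>j\<in>J. c * G j True + (1 - c) * G j False) / (real n - 1)" .
  have "prob_ev n Q (\<lambda>s. s i = sg) = P0"
    using prob_ev_agent_symmetric[OF sp i n] by (simp add: P0_def)
  then show ?thesis
    using pos unfolding interim_util_def num by (simp add: P0_def G_def J_def)
qed

text \<open>For an agent whose posterior that a partner has signal \<open>h\<close> is \<open>c\<close>, the expected excess of
  \<open>h\<close>-reports over truthful reports among the agents \<open>j \<in> D - {i}\<close>, when \<open>j\<close> reports \<open>h\<close> on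
  signal \<open>l\<close> with probability \<open>x j\<close> and \<open>l\<close> on signal \<open>h\<close> with probability \<open>z j\<close>.\<close>
definition report_shift :: "real \<Rightarrow> nat set \<Rightarrow> (nat \<Rightarrow> real) \<Rightarrow> (nat \<Rightarrow> real) \<Rightarrow> nat \<Rightarrow> real" where
  "report_shift c D x z i = (1 - c) * (\<Sum>j\<in>D - {i}. x j) - c * (\<Sum>j\<in>D - {i}. z j)"

lemma report_shift_swap: "report_shift (1 - c) D z x i = - report_shift c D x z i"
  by (simp add: report_shift_def algebra_simps)

lemma report_shift_add_swap:
  "report_shift p D x z i + report_shift (1 - q) D z x i
     = (q - p) * ((\<Sum>j\<in>D - {i}. x j) + (\<Sum>j\<in>D - {i}. z j))"
  by (simp add: report_shift_def algebra_simps)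

lemma report_shift_restrict:
  assumes "D \<subseteq> A" "finite A" "\<And>j. j \<in> A - D \<Longrightarrow> x j = 0 \<and> z j = 0"
  shows "report_shift c A x z i = report_shift c D x z i"
proof -
  have "(\<Sum>j\<in>A - {i}. f j) = (\<Sum>j\<in>D - {i}. f j)" if "\<And>j. j \<in> A - D \<Longrightarrow> f j = 0" for f :: "nat \<Rightarrow> real"
    using assms that by (intro sum.mono_neutral_right) auto
  then show ?thesis
    using assms(3) by (simp add: report_shift_def)
qed

lemma sum_others_le:
  fixes f :: "'a \<Rightarrow> real"
  assumes "finite D" "i \<in> D" "\<And>j. j \<in> D \<Longrightarrow> f j \<le> M"
  shows "(\<Sum>j\<in>D - {i}. f j) \<le> (real (card D) - 1) * M"
proof -
  have "card D \<ge> 1"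
    using assms(1,2) by (simp add: Suc_le_eq card_gt_0_iff) blast
  then show ?thesis
    using sum_bounded_above[of "D - {i}" f M] assms by (simp add: card_Diff_singleton of_nat_diff)
qed

lemma report_shift_le:
  assumes "finite D" "i \<in> D" "0 \<le> c" "c \<le> 1"
    and "\<And>j. j \<in> D \<Longrightarrow> x j \<le> M" "\<And>j. j \<in> D \<Longrightarrow> 0 \<le> z j"
  shows "report_shift c D x z i \<le> (1 - c) * ((real (card D) - 1) * M)"
proof -
  have "0 \<le> c * (\<Sum>j\<in>D - {i}. z j)"
    using assms by (intro mult_nonneg_nonneg sum_nonneg) auto
  then have "report_shift c D x z i \<le> (1 - c) * (\<Sum>j\<in>D - {i}. x j)"
    by (simp add: report_shift_def)
  also have "\<dots> \<le> (1 - c) * ((real (card D) - 1) * M)"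
    using assms sum_others_le[of D i x M] by (intro mult_left_mono) auto
  finally show ?thesis .
qed

lemma sum_indicator_others:
  assumes "i < k" "k \<le> n"
  shows "(\<Sum>j\<in>{..<n} - {i}. if j < k then u else 0) = (real k - 1) * u"
proof -
  have "(\<Sum>j\<in>{..<n} - {i}. if j < k then u else 0) = (\<Sum>j\<in>{..<k} - {i}. u)"
    using assms by (intro sum.mono_neutral_cong_right) auto
  then show ?thesis
    using assms by (simp add: of_nat_diff)
qed

lemma report_shift_uniform:
  assumes "i < k" "k \<le> n"
  shows "report_shift c {..<n} (\<lambda>j. if j < k then u else 0) (\<lambda>j. if j < k then v else 0) i
      = (real k - 1) * ((1 - c) * u - c * v)"
  using assms by (simp add: report_shift_def sum_indicator_others algebra_simps)

lemma interim_util_eq: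
  assumes sp: "symmetric_prior n Q" and n: "n \<ge> 2" and i: "i < n"
    and pos: "prob_ev n Q (\<lambda>s. s 0 = sg) > 0"
  defines "c \<equiv> cond_h n Q sg"
  shows "interim_util PS n Q \<Sigma> i sg = (\<Sum>a\<in>UNIV. rep_prob (\<Sigma> i) sg a *
     (expected_score PS c (cond_h n Q a) + score_gap PS (cond_h n Q a)
        * report_shift c {..<n} (\<lambda>j. fst (\<Sigma> j)) (\<lambda>j. 1 - snd (\<Sigma> j)) i / (real n - 1)))"
    (is "_ = ?rhs")
proof -
  define J where "J = {..<n} - {i}"
  define u where "u j = (1 - c) * fst (\<Sigma> j) - c * (1 - snd (\<Sigma> j))" for j
  have "real (card J) = real n - 1"
    using i n by (simp add: J_def of_nat_diff)
  have "interim_util PS n Q \<Sigma> i sg = (\<Sum>j\<in>J. \<Sum>a\<in>UNIV. rep_prob (\<Sigma> i) sg a *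
        (expected_score PS c (cond_h n Q a) + score_gap PS (cond_h n Q a) * u j)) / (real n - 1)"
    unfolding interim_util_pairwise[OF sp n i pos] pair_score_partner_average c_def[symmetric]
    by (simp add: u_def J_def)
  also have "\<dots> = (\<Sum>a\<in>UNIV. rep_prob (\<Sigma> i) sg a *
        (\<Sum>j\<in>J. expected_score PS c (cond_h n Q a) + score_gap PS (cond_h n Q a) * u j)) / (real n - 1)"
    by (simp add: sum.swap[of _ J] sum_distrib_left)
  also have "\<dots> = (\<Sum>a\<in>UNIV. rep_prob (\<Sigma> i) sg a * ((real n - 1) * expected_score PS c (cond_h n Q a)
        + score_gap PS (cond_h n Q a) * report_shift c {..<n} (\<lambda>j. fst (\<Sigma> j)) (\<lambda>j. 1 - snd (\<Sigma> j)) i))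
        / (real n - 1)"
    using \<open>real (card J) = real n - 1\<close>
    by (simp add: sum.distrib report_shift_def u_def sum_subtractf flip: sum_distrib_left J_def)
  also have "\<dots> = ?rhs"
    unfolding sum_divide_distrib using n by (intro sum.cong) (auto simp: field_simps)
  finally show ?thesis .
qed

text \<open>\<open>lie_gain t a b c P\<close> is \<open>n - 1\<close> times the interim gain of a coalition member that lies with
  probability \<open>t\<close>, when the score gap at the posterior of its truthful report is \<open>a\<close>, that at
  the posterior of its lie is \<open>b\<close>, its partners shift the reports by \<open>P\<close>, and \<open>c\<close> is \<open>n - 1\<close>
  times the loss from lying alone.\<close>
definition lie_gain :: "real \<Rightarrow> real \<Rightarrow> real \<Rightarrow> real \<Rightarrow> real \<Rightarrow> real" where
  "lie_gain t a b c P = (1 - t) * a * P + t * (b * P - c)"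

lemma deviation_gains:
  fixes \<Sigma> :: "nat \<Rightarrow> real \<times> real"
  assumes sp: "symmetric_prior n Q" and n: "n \<ge> 2" and i: "i < n"
    and pos: "\<And>sg. prob_ev n Q (\<lambda>s. s 0 = sg) > 0"
    and q: "cond_h n Q True = q" and p: "cond_h n Q False = p"
  defines "x \<equiv> \<lambda>j. fst (\<Sigma> j)" and "z \<equiv> \<lambda>j. 1 - snd (\<Sigma> j)"
  shows "(interim_util PS n Q \<Sigma> i False - interim_util PS n Q truthful i False) * (real n - 1)
      = lie_gain (x i) (score_gap PS p) (score_gap PS q)
          ((real n - 1) * (expected_score PS p p - expected_score PS p q)) (report_shift p {..<n} x z i)"
    and "(interim_util PS n Q \<Sigma> i True - interim_util PS n Q truthful i True) * (real n - 1)
      = lie_gain (z i) (- score_gap PS q) (- score_gap PS p)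
          ((real n - 1) * (expected_score PS q q - expected_score PS q p)) (report_shift (1 - q) {..<n} z x i)"
proof -
  define N where "N = real n - 1"
  have "N \<noteq> 0"
    using n by (simp add: N_def)
  then have gain: "((1 - t) * (e0 + a * P / N) + t * (e1 + b * P / N) - e0) * N
      = lie_gain t a b (N * (e0 - e1)) P" for t e0 e1 a b P
    by (simp add: lie_gain_def field_simps)
  note util = interim_util_eq[OF sp n i pos, folded N_def]
  have "interim_util PS n Q \<Sigma> i False
      = (1 - x i) * (expected_score PS p p + score_gap PS p * report_shift p {..<n} x z i / N)
      + x i * (expected_score PS p q + score_gap PS q * report_shift p {..<n} x z i / N)"
    by (simp add: util UNIV_bool rep_prob_def p q x_def z_def)
  moreover have "interim_util PS n Q truthful i False = expected_score PS p p"
    by (simp add: util report_shift_def UNIV_bool rep_prob_def truthful_def p)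
  ultimately show "(interim_util PS n Q \<Sigma> i False - interim_util PS n Q truthful i False) * (real n - 1)
      = lie_gain (x i) (score_gap PS p) (score_gap PS q)
          ((real n - 1) * (expected_score PS p p - expected_score PS p q)) (report_shift p {..<n} x z i)"
    by (simp only: gain flip: N_def)
  have "interim_util PS n Q \<Sigma> i True
      = (1 - z i) * (expected_score PS q q + score_gap PS q * report_shift q {..<n} x z i / N)
      + z i * (expected_score PS q p + score_gap PS p * report_shift q {..<n} x z i / N)"
    by (simp add: util UNIV_bool rep_prob_def p q x_def z_def)
  moreover have "interim_util PS n Q truthful i True = expected_score PS q q"
    by (simp add: util report_shift_def UNIV_bool rep_prob_def truthful_def q)
  ultimately show "(interim_util PS n Q \<Sigma> i True - interim_util PS n Q truthful i True) * (real n - 1)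
      = lie_gain (z i) (- score_gap PS q) (- score_gap PS p)
          ((real n - 1) * (expected_score PS q q - expected_score PS q p)) (report_shift (1 - q) {..<n} z x i)"
    by (simp only: gain report_shift_swap flip: N_def) (simp add: lie_gain_def)
qed

lemma uniform_deviation_gains:
  fixes \<sigma> :: "real \<times> real"
  assumes sp: "symmetric_prior n Q" and n: "n \<ge> 2" and pos: "\<And>sg. prob_ev n Q (\<lambda>s. s 0 = sg) > 0"
    and q: "cond_h n Q True = q" and p: "cond_h n Q False = p"
    and "i < k" "k \<le> n"
  defines "\<Sigma>' \<equiv> \<lambda>j. if j < k then \<sigma> else truthful j"
  shows "(interim_util PS n Q \<Sigma>' i False - interim_util PS n Q truthful i False) * (real n - 1)
      = lie_gain (fst \<sigma>) (score_gap PS p) (score_gap PS q)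
          ((real n - 1) * (expected_score PS p p - expected_score PS p q))
          ((real k - 1) * ((1 - p) * fst \<sigma> - p * (1 - snd \<sigma>)))"
    and "(interim_util PS n Q \<Sigma>' i True - interim_util PS n Q truthful i True) * (real n - 1)
      = lie_gain (1 - snd \<sigma>) (- score_gap PS q) (- score_gap PS p)
          ((real n - 1) * (expected_score PS q q - expected_score PS q p))
          ((real k - 1) * (q * (1 - snd \<sigma>) - (1 - q) * fst \<sigma>))"
  using deviation_gains[OF sp n _ pos q p, where \<Sigma> = \<Sigma>' and PS = PS and i = i] assms
  by (simp_all add: \<Sigma>'_def truthful_def if_distrib report_shift_uniform cong: if_cong)

lemma lie_gain_le:
  assumes "0 \<le> a" "a \<le> b" "0 \<le> t" "t \<le> 1"
  shows "lie_gain t a b c P \<le> max 0 (b * P) - t * c"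
proof (cases "P \<le> 0")
  case True
  have "0 \<le> (1 - t) * a" "0 \<le> t * b"
    using assms by simp_all
  then have "(1 - t) * a * P \<le> 0" "t * b * P \<le> 0"
    using True by (simp_all add: mult_nonneg_nonpos)
  then show ?thesis by (simp add: lie_gain_def algebra_simps)
next
  case False
  then have "(1 - t) * a * P \<le> (1 - t) * b * P"
    using assms by (intro mult_right_mono mult_left_mono) auto
  then show ?thesis by (simp add: lie_gain_def algebra_simps)
qed

lemma lie_gain_zero_shift_nonneg_iff:
  assumes "0 < c" "0 \<le> t"
  shows "0 \<le> lie_gain t a b c 0 \<longleftrightarrow> t = 0"
  using assms by (auto simp: lie_gain_def mult_le_0_iff)

text \<open>For \<open>a < 0 < b\<close> a shift \<open>P > 0\<close> makes the truthful branch \<open>a * P\<close> of \<^const>\<open>lie_gain\<close>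
  negative, and the bound keeps the lying branch \<open>b * P - c\<close> negative as well.\<close>
lemma report_shift_nonpos_if_lie_gain_nonneg:
  assumes "finite D" "i \<in> D" "\<And>j. j \<in> D \<Longrightarrow> x j \<le> 1" "\<And>j. j \<in> D \<Longrightarrow> 0 \<le> z j"
    and "0 \<le> p" "p \<le> 1"
    and "0 \<le> t" "t \<le> 1" "a < 0" "0 < b"
    and bound: "(real (card D) - 1) * (1 - p) * b < c"
    and gain: "0 \<le> lie_gain t a b c (report_shift p D x z i)"
  shows "report_shift p D x z i \<le> 0"
proof (rule ccontr)
  define P where "P = report_shift p D x z i"
  assume "\<not> P \<le> 0"
  then have "a * P < 0"
    using \<open>a < 0\<close> by (simp add: mult_neg_pos)
  moreover have "b * P - c < 0"
  proof -
    have "b * P \<le> b * ((1 - p) * (real (card D) - 1))"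
      using report_shift_le[of D i p x 1 z] assms by (intro mult_left_mono) (auto simp: P_def)
    then show ?thesis using bound by (simp add: algebra_simps)
  qed
  ultimately have "lie_gain t a b c P < 0"
  proof (cases "t = 0")
    case False
    then have "t * (b * P - c) < 0" "(1 - t) * (a * P) \<le> 0"
      using \<open>a * P < 0\<close> \<open>b * P - c < 0\<close> \<open>0 \<le> t\<close> \<open>t \<le> 1\<close>
      by (simp_all add: mult_pos_neg mult_nonneg_nonpos)
    then show ?thesis by (simp add: lie_gain_def mult.assoc)
  qed (simp add: lie_gain_def)
  with gain show False by (simp add: P_def)
qed

text \<open>When the score gap is nonnegative at both posteriors, look at a member lying most often:
  its partners shift the reports by at most \<open>card D - 1\<close> times its own lying probability, too
  little to pay for the loss from lying.\<close>
lemma lies_up_vanish: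
  assumes fin: "finite D" and x: "\<And>j. j \<in> D \<Longrightarrow> 0 \<le> x j \<and> x j \<le> 1" and z: "\<And>j. j \<in> D \<Longrightarrow> 0 \<le> z j"
    and "0 \<le> p" "p \<le> 1" "0 \<le> a" "a < b"
    and bound: "(real (card D) - 1) * (1 - p) * b < c"
    and gain: "\<And>i. i \<in> D \<Longrightarrow> 0 \<le> lie_gain (x i) a b c (report_shift p D x z i)"
    and "i \<in> D"
  shows "x i = 0"
proof -
  have "Max (x ` D) \<in> x ` D"
    using fin \<open>i \<in> D\<close> by (intro Max_in) auto
  then obtain m where m: "m \<in> D" "x m = Max (x ` D)"
    by auto
  have max: "x j \<le> x m" if "j \<in> D" for j
    using fin that m by simp
  have "x m = 0"
  proof (rule ccontr)
    assume "x m \<noteq> 0"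
    then have "x m > 0" using x[OF m(1)] by simp
    have "b * report_shift p D x z m \<le> b * ((1 - p) * ((real (card D) - 1) * x m))"
      using report_shift_le[of D m p x "x m" z] assms m max by (intro mult_left_mono) auto
    moreover have "0 \<le> b * ((1 - p) * ((real (card D) - 1) * x m))"
      using assms m card_gt_0_iff[of D] \<open>x m > 0\<close>
      by (intro mult_nonneg_nonneg) (auto simp: Suc_le_eq)
    ultimately have "lie_gain (x m) a b c (report_shift p D x z m)
        \<le> x m * ((real (card D) - 1) * (1 - p) * b - c)"
      using lie_gain_le[of a b "x m" c "report_shift p D x z m"] assms x[OF m(1)]
      by (simp add: algebra_simps)
    also have "\<dots> < 0"
      using bound \<open>x m > 0\<close> by (simp add: mult_pos_neg)
    finally show False using gain[OF m(1)] by simp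
  qed
  then show ?thesis
    using max[OF \<open>i \<in> D\<close>] x[OF \<open>i \<in> D\<close>] by simp
qed

lemma lies_vanish_if_score_gap_nonneg:
  assumes fin: "finite D"
    and x: "\<And>j. j \<in> D \<Longrightarrow> 0 \<le> x j \<and> x j \<le> 1" and z: "\<And>j. j \<in> D \<Longrightarrow> 0 \<le> z j \<and> z j \<le> 1"
    and "0 \<le> p" "p \<le> 1" "0 \<le> q" "0 \<le> a" "a < b" "0 < c'"
    and bound: "(real (card D) - 1) * (1 - p) * b < c"
    and gain: "\<And>i. i \<in> D \<Longrightarrow> 0 \<le> lie_gain (x i) a b c (report_shift p D x z i)"
    and gain': "\<And>i. i \<in> D \<Longrightarrow> 0 \<le> lie_gain (z i) (- b) (- a) c' (report_shift (1 - q) D z x i)"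
    and "i \<in> D"
  shows "x i = 0 \<and> z i = 0"
proof -
  have x0: "x j = 0" if "j \<in> D" for j
    using lies_up_vanish[OF fin x _ \<open>0 \<le> p\<close> \<open>p \<le> 1\<close> \<open>0 \<le> a\<close> \<open>a < b\<close> bound gain that] z by blast
  have "0 \<le> q * (\<Sum>j\<in>D - {i}. z j)"
    using \<open>0 \<le> q\<close> z by (intro mult_nonneg_nonneg sum_nonneg) auto
  then have "0 \<le> report_shift (1 - q) D z x i"
    by (simp add: report_shift_def x0)
  moreover have "0 \<le> 1 - z i" "0 \<le> z i" "0 \<le> b"
    using z[OF \<open>i \<in> D\<close>] assms by auto
  ultimately have "0 \<le> (1 - z i) * b * report_shift (1 - q) D z x i"
    "0 \<le> z i * a * report_shift (1 - q) D z x i"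
    using \<open>0 \<le> a\<close> by simp_all
  then have "z i * c' \<le> 0"
    using gain'[OF \<open>i \<in> D\<close>] by (simp add: lie_gain_def algebra_simps)
  then have "z i = 0"
    using \<open>0 < c'\<close> \<open>0 \<le> z i\<close> by (simp add: mult_le_0_iff)
  with x0[OF \<open>i \<in> D\<close>] show ?thesis ..
qed

text \<open>Swapping the roles of the two signals, i.e. replacing \<open>(p, q, x, z, a, b, c, c')\<close> by
  \<open>(1 - q, 1 - p, z, x, -b, -a, c', c)\<close>, exchanges the two gains; this halves the case analysis.\<close>
lemma coalition_lies_vanish:
  assumes fin: "finite D"
    and x: "\<And>j. j \<in> D \<Longrightarrow> 0 \<le> x j \<and> x j \<le> 1" and z: "\<And>j. j \<in> D \<Longrightarrow> 0 \<le> z j \<and> z j \<le> 1"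
    and pq: "0 < p" "p < q" "q < 1" and "0 < c" "0 < c'" "a < b"
    and bound: "0 < b \<Longrightarrow> (real (card D) - 1) * (1 - p) * b < c"
    and bound': "a < 0 \<Longrightarrow> (real (card D) - 1) * q * (- a) < c'"
    and gain: "\<And>i. i \<in> D \<Longrightarrow> 0 \<le> lie_gain (x i) a b c (report_shift p D x z i)"
    and gain': "\<And>i. i \<in> D \<Longrightarrow> 0 \<le> lie_gain (z i) (- b) (- a) c' (report_shift (1 - q) D z x i)"
    and "i \<in> D"
  shows "x i = 0 \<and> z i = 0"
proof -
  consider "a < 0" "0 < b" | "0 \<le> a" | "b \<le> 0"
    by linarith
  then show ?thesis
  proof cases
    case 1
    have "report_shift p D x z i \<le> 0"
      using report_shift_nonpos_if_lie_gain_nonneg[OF fin \<open>i \<in> D\<close> _ _ _ _ _ _ \<open>a < 0\<close> \<open>0 < b\<close>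
          bound gain] x z pq \<open>i \<in> D\<close> 1 by auto
    moreover have "report_shift (1 - q) D z x i \<le> 0"
      using report_shift_nonpos_if_lie_gain_nonneg[of D i z x "1 - q" "z i" "- b" "- a" c']
        fin \<open>i \<in> D\<close> bound' gain' x z pq 1 by auto
    moreover have "0 \<le> report_shift p D x z i + report_shift (1 - q) D z x i"
      unfolding report_shift_add_swap using x z pq by (intro mult_nonneg_nonneg add_nonneg_nonneg sum_nonneg) auto
    ultimately have "report_shift p D x z i = 0" "report_shift (1 - q) D z x i = 0"
      by linarith+
    then show ?thesis
      using gain[OF \<open>i \<in> D\<close>] gain'[OF \<open>i \<in> D\<close>] x[OF \<open>i \<in> D\<close>] z[OF \<open>i \<in> D\<close>]
        lie_gain_zero_shift_nonneg_iff \<open>0 < c\<close> \<open>0 < c'\<close> by metis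
  next
    case 2
    with \<open>a < b\<close> have "0 < b" by simp
    then show ?thesis
      using lies_vanish_if_score_gap_nonneg[OF fin x z _ _ _ 2 \<open>a < b\<close> \<open>0 < c'\<close> _ gain gain' \<open>i \<in> D\<close>]
        bound pq by simp
  next
    case 3
    have "z i = 0 \<and> x i = 0"
      using lies_vanish_if_score_gap_nonneg[of D z x "1 - q" "1 - p" "- b" "- a" c c' i]
        fin x z pq \<open>a < b\<close> 3 \<open>0 < c\<close> bound' gain gain' \<open>i \<in> D\<close> by simp
    then show ?thesis by simp
  qed
qed

lemma expected_score_less:
  assumes "strictly_proper PS" "0 \<le> p" "p \<le> 1" "0 \<le> q" "q \<le> 1" "p \<noteq> q"
  shows "expected_score PS p q < expected_score PS p p"
  using assms by (simp add: strictly_proper_def expected_score_def)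

lemma score_gap_strict_mono:
  assumes "strictly_proper PS" "0 \<le> p" "p < q" "q \<le> 1"
  shows "score_gap PS p < score_gap PS q"
proof -
  have "(q - p) * (score_gap PS q - score_gap PS p)
      = (expected_score PS p p - expected_score PS p q) + (expected_score PS q q - expected_score PS q p)"
    by (simp add: score_gap_def expected_score_def algebra_simps)
  also have "\<dots> > 0"
    using expected_score_less[OF assms(1), of p q] expected_score_less[OF assms(1), of q p] assms by simp
  finally show ?thesis
    using assms by (simp add: zero_less_mult_iff)
qed

lemma kB_h_eq:
  "kB_h PS p q n = (if 0 < score_gap PS q
     then \<lceil>(real n - 1) * (expected_score PS p p - expected_score PS p q) / ((1 - p) * score_gap PS q)\<rceil>
     else int n)"
  by (simp add: kB_h_def score_gap_def expected_score_def algebra_simps)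

lemma kB_l_eq:
  "kB_l PS p q n = (if score_gap PS p < 0
     then \<lceil>(real n - 1) * (expected_score PS q q - expected_score PS q p) / (q * - score_gap PS p)\<rceil>
     else int n)"
  by (simp add: kB_l_def score_gap_def expected_score_def algebra_simps)

lemma less_of_le_nat_ceiling:
  assumes "m \<le> nat \<lceil>r\<rceil>" "0 < r"
  shows "real m - 1 < r"
  using assms by (cases "m = 0") (auto simp: le_nat_iff le_ceiling_iff)

lemma mult_less_of_le_nat_ceiling_divide:
  assumes "m \<le> nat \<lceil>e / d\<rceil>" "0 < e" "0 < d"
  shows "(real m - 1) * d < e"
  using less_of_le_nat_ceiling[OF assms(1)] assms(2,3) by (simp add: pos_less_divide_eq)

lemma le_mult_of_ceiling_divide_less:
  assumes "\<lceil>e / d\<rceil> < int k" "0 < d"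
  shows "e \<le> (real k - 1) * d"
  using assms by (simp add: ceiling_less_iff pos_divide_le_eq)

lemma le_nat_kB_bounds:
  assumes "m \<le> nat (kB PS p q n)" "n \<ge> 2" "0 < p" "p < q" "q < 1" "strictly_proper PS"
  shows "0 < score_gap PS q \<Longrightarrow>
      (real m - 1) * (1 - p) * score_gap PS q < (real n - 1) * (expected_score PS p p - expected_score PS p q)"
    and "score_gap PS p < 0 \<Longrightarrow>
      (real m - 1) * q * - score_gap PS p < (real n - 1) * (expected_score PS q q - expected_score PS q p)"
proof -
  have kB_h: "m \<le> nat (kB_h PS p q n)" and kB_l: "m \<le> nat (kB_l PS p q n)"
    using assms(1) unfolding kB_def by linarith+
  have El: "0 < expected_score PS p p - expected_score PS p q"
    and Eh: "0 < expected_score PS q q - expected_score PS q p"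
    using expected_score_less[OF assms(6)] assms by auto
  show "(real m - 1) * (1 - p) * score_gap PS q < (real n - 1) * (expected_score PS p p - expected_score PS p q)"
    if "0 < score_gap PS q"
    using mult_less_of_le_nat_ceiling_divide[OF kB_h[unfolded kB_h_eq if_P[OF that]]] assms that El
    by (simp add: mult.assoc)
  show "(real m - 1) * q * - score_gap PS p < (real n - 1) * (expected_score PS q q - expected_score PS q p)"
    if "score_gap PS p < 0"
    using mult_less_of_le_nat_ceiling_divide[OF kB_l[unfolded kB_l_eq if_P[OF that]]] assms that Eh
    by (simp add: mult.assoc mult_pos_neg)
qed

lemma kB_less_cases:
  assumes "kB PS p q n < int k" "k \<le> n" "p < 1" "0 < q"
  obtains "0 < score_gap PS q"
      "(real n - 1) * (expected_score PS p p - expected_score PS p q) \<le> (real k - 1) * ((1 - p) * score_gap PS q)"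
    | "score_gap PS p < 0"
      "(real n - 1) * (expected_score PS q q - expected_score PS q p) \<le> (real k - 1) * (q * - score_gap PS p)"
proof -
  have "kB_h PS p q n < int k \<or> kB_l PS p q n < int k"
    using assms by (auto simp: kB_def)
  then show ?thesis
  proof
    assume less: "kB_h PS p q n < int k"
    then have gap: "0 < score_gap PS q"
      using assms(2) by (auto simp: kB_h_eq split: if_splits)
    with assms(3) less have "(real n - 1) * (expected_score PS p p - expected_score PS p q)
        \<le> (real k - 1) * ((1 - p) * score_gap PS q)"
      by (intro le_mult_of_ceiling_divide_less) (simp_all add: kB_h_eq)
    with gap show ?thesis by (rule that(1))
  next
    assume less: "kB_l PS p q n < int k"
    then have gap: "score_gap PS p < 0"
      using assms(2) by (auto simp: kB_l_eq split: if_splits)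
    with assms(4) less have "(real n - 1) * (expected_score PS q q - expected_score PS q p)
        \<le> (real k - 1) * (q * - score_gap PS p)"
      by (intro le_mult_of_ceiling_divide_less) (simp_all add: kB_l_eq mult_pos_neg)
    with gap show ?thesis by (rule that(2))
  qed
qed

lemma truthful_bayes_strong_eq_kB:
  assumes sp: "symmetric_prior n Q" and n: "n \<ge> 2" and pos: "\<And>sg. prob_ev n Q (\<lambda>s. s 0 = sg) > 0"
    and q: "cond_h n Q True = q" and p: "cond_h n Q False = p"
    and pq: "0 < p" "p < q" "q < 1" and spr: "strictly_proper PS"
  shows "bayes_strong_eq PS n Q (nat (kB PS p q n)) truthful"
  unfolding bayes_strong_eq_def
proof (intro notI, elim exE conjE)
  fix D \<Sigma>' assume D: "D \<subseteq> {..<n}" and card: "card D \<le> nat (kB PS p q n)"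
    and valid: "valid_profile n \<Sigma>'" and outside: "\<forall>i<n. i \<notin> D \<longrightarrow> \<Sigma>' i = truthful i"
    and weak: "\<forall>i\<in>D. \<forall>sg. interim_util PS n Q truthful i sg \<le> interim_util PS n Q \<Sigma>' i sg"
    and strict: "\<exists>i\<in>D. \<exists>sg. interim_util PS n Q truthful i sg < interim_util PS n Q \<Sigma>' i sg"
  define x where "x j = fst (\<Sigma>' j)" for j
  define z where "z j = 1 - snd (\<Sigma>' j)" for j
  define N where "N = real n - 1"
  have "N > 0" using n by (simp add: N_def)
  have fin: "finite D" using D finite_subset by blast
  have shift: "report_shift c {..<n} x z i = report_shift c D x z i"
    "report_shift c {..<n} z x i = report_shift c D z x i" for c i
    using outside D by (auto intro!: report_shift_restrict simp: x_def z_def truthful_def)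
  have gains: "(interim_util PS n Q \<Sigma>' i False - interim_util PS n Q truthful i False) * N
        = lie_gain (x i) (score_gap PS p) (score_gap PS q)
            (N * (expected_score PS p p - expected_score PS p q)) (report_shift p D x z i)"
    "(interim_util PS n Q \<Sigma>' i True - interim_util PS n Q truthful i True) * N
        = lie_gain (z i) (- score_gap PS q) (- score_gap PS p)
            (N * (expected_score PS q q - expected_score PS q p)) (report_shift (1 - q) D z x i)"
    if "i \<in> D" for i
    using deviation_gains[OF sp n _ pos q p, where \<Sigma> = \<Sigma>' and PS = PS and i = i] that D
    unfolding x_def[symmetric] z_def[symmetric] shift N_def by auto
  have El: "0 < expected_score PS p p - expected_score PS p q"
    and Eh: "0 < expected_score PS q q - expected_score PS q p"
    using expected_score_less[OF spr] pq by auto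
  have lies: "x i = 0 \<and> z i = 0" if "i \<in> D" for i
  proof (rule coalition_lies_vanish[OF fin _ _ pq _ _ score_gap_strict_mono[OF spr] _ _ _ _ that])
    show "0 < score_gap PS q \<Longrightarrow>
        (real (card D) - 1) * (1 - p) * score_gap PS q < N * (expected_score PS p p - expected_score PS p q)"
      "score_gap PS p < 0 \<Longrightarrow>
        (real (card D) - 1) * q * - score_gap PS p < N * (expected_score PS q q - expected_score PS q p)"
      using le_nat_kB_bounds[OF card n pq spr] by (simp_all add: N_def)
    show "0 \<le> lie_gain (x i) (score_gap PS p) (score_gap PS q)
        (N * (expected_score PS p p - expected_score PS p q)) (report_shift p D x z i)"
      "0 \<le> lie_gain (z i) (- score_gap PS q) (- score_gap PS p)
        (N * (expected_score PS q q - expected_score PS q p)) (report_shift (1 - q) D z x i)"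
      if "i \<in> D" for i
      using gains[OF that, symmetric] weak that \<open>N > 0\<close> by simp_all
  qed (use valid D El Eh pq \<open>N > 0\<close> in \<open>auto simp: valid_profile_def x_def z_def\<close>)
  from strict obtain i sg where "i \<in> D" and gain: "interim_util PS n Q truthful i sg < interim_util PS n Q \<Sigma>' i sg"
    by blast
  have "report_shift c D x z i = 0" "report_shift c D z x i = 0" for c
    using lies by (simp_all add: report_shift_def)
  then have "(interim_util PS n Q \<Sigma>' i sg - interim_util PS n Q truthful i sg) * N = 0"
    using gains[OF \<open>i \<in> D\<close>] lies[OF \<open>i \<in> D\<close>] by (cases sg) (simp_all add: lie_gain_def)
  with gain \<open>N > 0\<close> show False by simp
qed

lemma not_bayes_strong_eq_if_uniform_lie_gains:
  fixes \<sigma> :: "real \<times> real" and PS :: "bool \<Rightarrow> real \<Rightarrow> real"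
  assumes sp: "symmetric_prior n Q" and n: "n \<ge> 2" and pos: "\<And>sg. prob_ev n Q (\<lambda>s. s 0 = sg) > 0"
    and q: "cond_h n Q True = q" and p: "cond_h n Q False = p"
    and k: "0 < k" "k \<le> n" and \<sigma>: "0 \<le> fst \<sigma>" "fst \<sigma> \<le> 1" "0 \<le> snd \<sigma>" "snd \<sigma> \<le> 1"
  defines "gain_l \<equiv> lie_gain (fst \<sigma>) (score_gap PS p) (score_gap PS q)
      ((real n - 1) * (expected_score PS p p - expected_score PS p q))
      ((real k - 1) * ((1 - p) * fst \<sigma> - p * (1 - snd \<sigma>)))"
    and "gain_h \<equiv> lie_gain (1 - snd \<sigma>) (- score_gap PS q) (- score_gap PS p)
      ((real n - 1) * (expected_score PS q q - expected_score PS q p))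
      ((real k - 1) * (q * (1 - snd \<sigma>) - (1 - q) * fst \<sigma>))"
  assumes gains: "0 \<le> gain_l" "0 \<le> gain_h" "0 < gain_l \<or> 0 < gain_h"
  shows "\<not> bayes_strong_eq PS n Q k truthful"
proof -
  define \<Sigma>' where "\<Sigma>' j = (if j < k then \<sigma> else truthful j)" for j
  have N: "real n - 1 > 0" using n by simp
  have gain_eqs: "(interim_util PS n Q \<Sigma>' i False - interim_util PS n Q truthful i False) * (real n - 1) = gain_l"
    "(interim_util PS n Q \<Sigma>' i True - interim_util PS n Q truthful i True) * (real n - 1) = gain_h"
    if "i < k" for i
    using uniform_deviation_gains[OF sp n pos q p that k(2), of PS \<sigma>]
    unfolding \<Sigma>'_def[symmetric] gain_l_def[symmetric] gain_h_def[symmetric] by simp_all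
  have weak: "interim_util PS n Q truthful i sg \<le> interim_util PS n Q \<Sigma>' i sg" if "i < k" for i sg
    using gains N unfolding gain_eqs[OF that, symmetric]
    by (cases sg) (simp_all add: zero_le_mult_iff)
  have strict: "0 < gain_l \<Longrightarrow> interim_util PS n Q truthful i False < interim_util PS n Q \<Sigma>' i False"
    "0 < gain_h \<Longrightarrow> interim_util PS n Q truthful i True < interim_util PS n Q \<Sigma>' i True"
    if "i < k" for i
    using N unfolding gain_eqs[OF that, symmetric] by (simp_all add: zero_less_mult_iff)
  show ?thesis
    unfolding bayes_strong_eq_def not_not
  proof (intro exI conjI)
    show "valid_profile n \<Sigma>'"
      using \<sigma> by (simp add: valid_profile_def \<Sigma>'_def truthful_def)
    show "\<exists>i\<in>{..<k}. \<exists>sg. interim_util PS n Q truthful i sg < interim_util PS n Q \<Sigma>' i sg"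
      using strict[OF k(1)] gains(3) k(1) by auto
  qed (use k weak in \<open>auto simp: \<Sigma>'_def\<close>)
qed

lemma truthful_not_bayes_strong_eq_above_kB:
  assumes sp: "symmetric_prior n Q" and n: "n \<ge> 2" and pos: "\<And>sg. prob_ev n Q (\<lambda>s. s 0 = sg) > 0"
    and q: "cond_h n Q True = q" and p: "cond_h n Q False = p"
    and pq: "0 < p" "p < q" "q < 1" and spr: "strictly_proper PS"
    and k: "kB PS p q n < int k" "k \<le> n"
  shows "\<not> bayes_strong_eq PS n Q k truthful"
proof -
  have El: "0 < (real n - 1) * (expected_score PS p p - expected_score PS p q)"
    and Eh: "0 < (real n - 1) * (expected_score PS q q - expected_score PS q p)"
    using expected_score_less[OF spr] pq n by auto
  note uniform_deviation = not_bayes_strong_eq_if_uniform_lie_gains[OF sp n pos q p _ k(2), where PS = PS]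
  have "p < 1" "0 < q" using pq by simp_all
  from k this show ?thesis
  proof (cases rule: kB_less_cases)
    case 1
    then have "0 < (real k - 1) * ((1 - p) * score_gap PS q)"
      using El by linarith
    moreover have "0 < (1 - p) * score_gap PS q"
      using 1 pq by simp
    ultimately have "0 < real k - 1"
      by (rule zero_less_mult_pos2)
    moreover have "(q - 1) * (real k - 1) < 0"
      using pq \<open>0 < real k - 1\<close> by (simp add: mult_neg_pos)
    then have "score_gap PS q * ((q - 1) * (real k - 1)) < 0"
      using 1 by (simp add: mult_pos_neg)
    ultimately show ?thesis
      using uniform_deviation[of "(1, 1)"] 1 by (simp add: lie_gain_def mult_ac)
  next
    case 2
    then have "0 < (real k - 1) * (q * - score_gap PS p)"
      using Eh by linarith
    moreover have "0 < q * - score_gap PS p"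
      using 2 pq by (simp add: mult_pos_neg)
    ultimately have "0 < real k - 1"
      by (rule zero_less_mult_pos2)
    moreover have "score_gap PS p * ((real k - 1) * p) < 0"
      using 2 pq \<open>0 < real k - 1\<close> by (simp add: mult_neg_pos)
    ultimately show ?thesis
      using uniform_deviation[of "(0, 0)"] 2 by (simp add: lie_gain_def mult_ac)
  qed
qed

theorem theorem2:
  fixes ph phh phl :: real and PS :: "bool \<Rightarrow> real \<Rightarrow> real"
  assumes "0 < ph" and "ph < 1"
    and "phh > phl" and "phl > 0" and "phh < 1"
    and "strictly_proper PS"
  shows "\<exists>n0::nat. \<forall>n\<ge>n0. \<forall>Q. symmetric_prior n Q \<and> marg_h n Q = ph \<and>
            cond_h n Q True = phh \<and> cond_h n Q False = phl \<longrightarrow>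
           bayes_strong_eq PS n Q (nat (kB PS phl phh n)) truthful \<and>
           (\<forall>k::nat. kB PS phl phh n < int k \<and> k \<le> n \<longrightarrow>
              \<not> bayes_strong_eq PS n Q k truthful)"
proof (intro exI[of _ 2] allI impI conjI)
  fix n :: nat and Q
  assume n: "2 \<le> n" and "symmetric_prior n Q \<and> marg_h n Q = ph \<and>
    cond_h n Q True = phh \<and> cond_h n Q False = phl"
  then have sp: "symmetric_prior n Q" and q: "cond_h n Q True = phh" and p: "cond_h n Q False = phl"
    and pos: "\<And>sg. prob_ev n Q (\<lambda>s. s 0 = sg) > 0"
    using prob_ev_signal_pos assms(1,2) by auto
  note pq = \<open>phl > 0\<close> \<open>phh > phl\<close> \<open>phh < 1\<close>
  show "bayes_strong_eq PS n Q (nat (kB PS phl phh n)) truthful"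
    using truthful_bayes_strong_eq_kB[OF sp n pos q p pq assms(6)] .
  show "\<not> bayes_strong_eq PS n Q k truthful" if "kB PS phl phh n < int k \<and> k \<le> n" for k
    using truthful_not_bayes_strong_eq_above_kB[OF sp n pos q p pq assms(6)] that by blast
qed

end
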